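(* Let $N\ge1$, $n\ge1$, $\beta>0$ real, and let $X^{(\beta,N)}_k$ ($k\in\mathcal L^{(1)}_n$) and $T^{(1)}_{ab}(\beta)$ be as in the context. Then: (i) for each $a=1,\dots,N$, $T^{(1)}_{aa}(\beta)X^{(\beta,N)}_k=\#\{i:\underline{k_i}=a\}\,X^{(\beta,N)}_k$; (ii) with $D=z_1\partial_{z_1}+\dots+z_n\partial_{z_n}$, $DX^{(\beta,N)}_k=|\overline{k}|\,X^{(\beta,N)}_k$, where $|\overline k|=\overline{k_1}+\dots+\overline{k_n}$.
   Context: For $k\in\mathbb Z$, $\underline{k}\in\{1,\dots,N\}$, $\overline{k}\in\mathbb Z$ unique with $k=\underline{k}-N\overline{k}$ (componentwise on sequences). Dominance order on $\mathbb Z^n$: distinct $k>l$ iff $\sum k_i=\sum l_i$ and $k_1+\dots+k_i\ge l_1+\dots+l_i$ for all $i$. $\mathcal L^{(1)}_n$ = strictly decreasing sequences in $\mathbb Z^n$. $V=\mathbb C^N$ (basis $v_a$, matrix units $E_{ab}$, $E^{(i)}_{ab}$ acting on the $i$-th factor of $V^{\otimes n}$). On $\mathbb C[z_1^{\pm1},\dots,z_n^{\pm1}]\otimes V^{\otimes n}$, $K_{ij}$ swaps $z_i,z_j$, $P_{ij}$ swaps factors $i,j$; $F_{N,n}=\{f:K_{ij}f=-P_{ij}f\}$, with basis $\hat u_k=\sum_{w\in S_n}\mathrm{sign}(w)z_1^{\overline{k_{w(1)}}}\cdots z_n^{\overline{k_{w(n)}}}\otimes v_{\underline{k_{w(1)}}}\otimes\cdots\otimes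 v_{\underline{k_{w(n)}}}$, $k\in\mathcal L^{(1)}_n$. $Y(\mathfrak{gl}_N)$ is generated by the coefficients of $T_{ab}(u)=\delta_{ab}+\sum_sT^{(s)}_{ab}u^{-s}$ with $(u-v)[T_{ab}(u),T_{cd}(v)]=T_{cb}(v)T_{ad}(u)-T_{cb}(u)T_{ad}(v)$; $A_m(u)=\sum_{w\in S_m}\mathrm{sign}(w)T_{1w(1)}(u)\cdots T_{mw(m)}(u-m+1)$. Let $d_i(\beta)=\beta^{-1}z_i\partial_{z_i}+n-i+\sum_{j>i}\frac{z_j}{z_j-z_i}(K_{ij}-1)-\sum_{j<i}\frac{z_i}{z_i-z_j}(K_{ij}-1)$, $L^{(i)}_{ab}(u)=\delta_{ab}+(u+d_i(\beta))^{-1}E^{(i)}_{ba}$ (expanded in $u^{-1}$) and $T_{ab}(u;\beta)=\sum_cL^{(1)}_{ac_1}(u)\cdots L^{(n)}_{c_{n-1}b}(u)$; this defines a $Y(\mathfrak{gl}_N)$-action on $F_{N,n}$, $A_m(u;\beta)$ is the image of $A_m(u)$, and $T^{(1)}_{ab}(\beta)$ is the coefficient of $u^{-1}$ in $T_{ab}(u;\beta)$ (equal to $\sum_iE^{(i)}_{ba}$). For $k\in\mathcal L^{(1)}_n$, $X^{(\beta,N)}_k$ is the unique common eigenvector of all coefficients of $A_1(u;\beta),\dots,A_N(u;\beta)$ of the form $\hat u_k+\sum_{l\in\mathcal L^{(1)}_n,\,l<k}c_{kl}\hat u_l$. *)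

theory Defs
  imports Complex_Main "HOL-Combinatorics.Permutations"
begin

text \<open>Elements of C[z_1^{+-1},...,z_n^{+-1}] (x) V^{(x)n} are represented by their coefficient
functions on basis keys (e, c): e = exponent list (length n), c = list of tensor indices in {1..N}
(length n); the key (e,c) stands for z^e (x) v_{c_1} (x) ... (x) v_{c_n}.
Positions (the index i of z_i, K_ij, E^(i), d_i) are 0-based list positions i < n.
Operator-valued formal series in u^{-1} are functions nat => operator (coefficient of u^{-s}).\<close>

type_synonym key = "int list \<times> nat list"
type_synonym vec = "key \<Rightarrow> complex"
type_synonym op = "vec \<Rightarrow> vec"
type_synonym ser = "nat \<Rightarrow> op"

definition vzero :: vec where "vzero = (\<lambda>_. 0)"
definition vadd :: "vec \<Rightarrow> vec \<Rightarrow> vec" where "vadd f g = (\<lambda>k. f k + g k)"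
definition vscale :: "complex \<Rightarrow> vec \<Rightarrow> vec" where "vscale a f = (\<lambda>k. a * f k)"
definition vsum :: "('a \<Rightarrow> vec) \<Rightarrow> 'a set \<Rightarrow> vec" where "vsum F A = (\<lambda>k. \<Sum>a\<in>A. F a k)"
definition opsum :: "('a \<Rightarrow> op) \<Rightarrow> 'a set \<Rightarrow> op" where "opsum F A = (\<lambda>f. vsum (\<lambda>a. F a f) A)"

definition basis :: "key \<Rightarrow> vec" where "basis k = (\<lambda>k'. if k' = k then 1 else 0)"

text \<open>Linear extension of an action on basis vectors (to finitely supported vectors).\<close>
definition lin :: "(key \<Rightarrow> vec) \<Rightarrow> op" where
  "lin M f = vsum (\<lambda>k'. vscale (f k') (M k')) {k'. f k' \<noteq> 0}"

definition swapl :: "nat \<Rightarrow> nat \<Rightarrow> 'a list \<Rightarrow> 'a list" where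
  "swapl i j xs = xs[i := xs ! j, j := xs ! i]"

text \<open>K_ij swaps z_i and z_j; P_ij swaps tensor factors i and j.\<close>
definition Kop :: "nat \<Rightarrow> nat \<Rightarrow> op" where "Kop i j f = (\<lambda>(e, c). f (swapl i j e, c))"
definition Pop :: "nat \<Rightarrow> nat \<Rightarrow> op" where "Pop i j f = (\<lambda>(e, c). f (e, swapl i j c))"

text \<open>z_i d/dz_i\<close>
definition zdop :: "nat \<Rightarrow> op" where "zdop i f = (\<lambda>(e, c). of_int (e ! i) * f (e, c))"

text \<open>E^{(i)}_{ab}: E_{ab} v_b = v_a on the i-th factor.\<close>
definition Eop :: "nat \<Rightarrow> nat \<Rightarrow> nat \<Rightarrow> op" where
  "Eop i a b f = (\<lambda>(e, c). if c ! i = a then f (e, c[i := b]) else 0)"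

text \<open>Rop i j = z_j/(z_j - z_i) (K_ij - 1), computed on monomials:
 for x = z_i, y = z_j:  y/(y-x) (x^b y^a - x^a y^b) = sum_{t<a-b} x^(b+t) y^(a-t) if a > b,
 = - sum_{t<b-a} x^(a+t) y^(b-t) if a < b, and 0 if a = b.\<close>
definition Rimg :: "nat \<Rightarrow> nat \<Rightarrow> key \<Rightarrow> vec" where
  "Rimg i j k = (case k of (e, c) \<Rightarrow>
     (let a = e ! i; b = e ! j in
      if b < a then vsum (\<lambda>t. basis (e[i := b + int t, j := a - int t], c)) {..<nat (a - b)}
      else if a < b then vscale (-1) (vsum (\<lambda>t. basis (e[i := a + int t, j := b - int t], c)) {..<nat (b - a)})
      else vzero))"

definition Rop :: "nat \<Rightarrow> nat \<Rightarrow> op" where "Rop i j = lin (Rimg i j)"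

text \<open>d_i(beta), for 0-based position i (so the constant n - i of the paper becomes n - 1 - i).\<close>
definition dop :: "nat \<Rightarrow> real \<Rightarrow> nat \<Rightarrow> op" where
  "dop n \<beta> i f = (\<lambda>k. complex_of_real (1 / \<beta>) * zdop i f k + of_nat (n - 1 - i) * f k
      + (\<Sum>j\<in>{i<..<n}. Rop i j f k) - (\<Sum>j\<in>{..<i}. Rop j i f k))"

definition unitser :: ser where "unitser s = (if s = 0 then id else (\<lambda>_. vzero))"

definition conv :: "ser \<Rightarrow> ser \<Rightarrow> ser" where
  "conv S1 S2 s = opsum (\<lambda>p. S1 p \<circ> S2 (s - p)) {..s}"

text \<open>L^{(i)}_{ab}(u) = delta_ab + (u + d_i)^{-1} E^{(i)}_{ba}
  = delta_ab + sum_{s>=1} (-1)^(s-1) d_i^(s-1) E^{(i)}_{ba} u^{-s}.\<close>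
definition Lser :: "nat \<Rightarrow> real \<Rightarrow> nat \<Rightarrow> nat \<Rightarrow> nat \<Rightarrow> ser" where
  "Lser n \<beta> i a b s = (if s = 0 then (if a = b then id else (\<lambda>_. vzero))
      else (\<lambda>f. vscale ((-1) ^ (s - 1)) ((dop n \<beta> i ^^ (s - 1)) (Eop i b a f))))"

text \<open>Tpart n N beta m a b = sum_c L^{(0)}_{a c_1} ... L^{(m)}_{c_m b} (0-based positions).\<close>
fun Tpart :: "nat \<Rightarrow> nat \<Rightarrow> real \<Rightarrow> nat \<Rightarrow> nat \<Rightarrow> nat \<Rightarrow> ser" where
  "Tpart n N \<beta> 0 a b = Lser n \<beta> 0 a b"
| "Tpart n N \<beta> (Suc m) a b =
     (\<lambda>s. opsum (\<lambda>c. conv (Tpart n N \<beta> m a c) (Lser n \<beta> (Suc m) c b) s) {1..N})"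

definition Tser :: "nat \<Rightarrow> nat \<Rightarrow> real \<Rightarrow> nat \<Rightarrow> nat \<Rightarrow> ser" where
  "Tser n N \<beta> a b = Tpart n N \<beta> (n - 1) a b"

text \<open>T_{ab}(u - j;beta) re-expanded in u^{-1}:
  (u-j)^{-s} = sum_r binom(s+r-1, r) j^r u^{-s-r}.\<close>
definition Tshift :: "nat \<Rightarrow> nat \<Rightarrow> real \<Rightarrow> nat \<Rightarrow> nat \<Rightarrow> nat \<Rightarrow> ser" where
  "Tshift n N \<beta> j a b t = (if t = 0 then Tser n N \<beta> a b 0
     else opsum (\<lambda>s f. vscale (of_nat ((t - 1) choose (t - s)) * of_nat j ^ (t - s)) (Tser n N \<beta> a b s f)) {1..t})"

fun prodser :: "(nat \<Rightarrow> ser) \<Rightarrow> nat \<Rightarrow> ser" where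
  "prodser F 0 = unitser"
| "prodser F (Suc m) = conv (prodser F m) (F (Suc m))"

text \<open>A_m(u;beta) = sum_w sign(w) T_{1 w(1)}(u) T_{2 w(2)}(u-1) ... T_{m w(m)}(u-m+1).\<close>
definition Aser :: "nat \<Rightarrow> nat \<Rightarrow> real \<Rightarrow> nat \<Rightarrow> ser" where
  "Aser n N \<beta> m t = opsum (\<lambda>w f. vscale (of_int (sign w))
      (prodser (\<lambda>r. Tshift n N \<beta> (r - 1) r (w r)) m t f)) {w. w permutes {1..m}}"

text \<open>k = under k - N * over k with under k in {1..N}.\<close>
definition under :: "nat \<Rightarrow> int \<Rightarrow> int" where "under N k = (k - 1) mod int N + 1"
definition over :: "nat \<Rightarrow> int \<Rightarrow> int" where "over N k = (under N k - k) div int N"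

definition uhat :: "nat \<Rightarrow> nat \<Rightarrow> int list \<Rightarrow> vec" where
  "uhat n N k = vsum (\<lambda>w. vscale (of_int (sign w))
      (basis (map (\<lambda>r. over N (k ! w r)) [0..<n], map (\<lambda>r. nat (under N (k ! w r))) [0..<n])))
      {w. w permutes {..<n}}"

definition Lone :: "nat \<Rightarrow> int list set" where
  "Lone n = {k. length k = n \<and> sorted_wrt (>) k}"

text \<open>Dominance order: dom_less l k means k > l.\<close>
definition dom_less :: "int list \<Rightarrow> int list \<Rightarrow> bool" where
  "dom_less l k = (l \<noteq> k \<and> length l = length k \<and> sum_list l = sum_list k
     \<and> (\<forall>i\<le>length k. sum_list (take i l) \<le> sum_list (take i k)))"

definition is_X :: "nat \<Rightarrow> nat \<Rightarrow> real \<Rightarrow> int list \<Rightarrow> vec \<Rightarrow> bool" where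
  "is_X n N \<beta> k X =
    ((\<exists>cf :: int list \<Rightarrow> complex.
        X = vadd (uhat n N k) (vsum (\<lambda>l. vscale (cf l) (uhat n N l)) {l \<in> Lone n. dom_less l k}))
     \<and> (\<forall>m\<in>{1..N}. \<forall>t. \<exists>ev. Aser n N \<beta> m t X = vscale ev X))"

definition Dop :: "nat \<Rightarrow> op" where "Dop n f = (\<lambda>k. \<Sum>i<n. zdop i f k)"

end

theory Submission
  imports Defs
begin

text \<open>Both operators of the statement are diagonal on the basis vectors
z^e \<otimes> v_c: T^(1)_aa = \<Sum>_i E^(i)_aa multiplies by the number of tensor factors
equal to a (the weight of c), and D multiplies by \<Sum>e. It therefore suffices that weight
and degree are constant on the support of X.

To first order in u^-1 only the identity permutation contributes to A_m(u), whose
u^-1 coefficient is T^(1)_11 + ... + T^(1)_mm. Being an eigenvector of these for all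
m \<le> N forces the weight at every key of the support to equal the weight at the leading
key of u_k, where X has coefficient 1. Every key of the support comes from some u_l with
\<Sum>l = \<Sum>k, and N \<cdot> \<Sum>over(l) = \<Sum>under(l) - \<Sum>l, where \<Sum>under(l) is determined by
the weight; this pins the degree to \<Sum>over(k). Neither d_i(\<beta>) nor \<beta> > 0 enters to
first order.\<close>

lemma vsum_cong: "(\<And>x. x \<in> A \<Longrightarrow> F x = G x) \<Longrightarrow> vsum F A = vsum G A"
  by (simp add: vsum_def)

lemma vsum_vadd: "vsum (\<lambda>x. vadd (F x) (G x)) A = vadd (vsum F A) (vsum G A)"
  by (simp add: vsum_def vadd_def sum.distrib)

lemma vsum_vzero: "vsum (\<lambda>_. vzero) A = vzero"
  by (simp add: vsum_def vzero_def)

lemma vsum_delta: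
  assumes "finite A"
  shows "vsum (\<lambda>x. if x = a then F x else vzero) A = (if a \<in> A then F a else vzero)"
proof -
  have "(if x = a then F x else vzero) y = (if x = a then F x y else 0)" for x y
    by (simp add: vzero_def)
  then show ?thesis using assms by (simp add: vsum_def vzero_def fun_eq_iff)
qed

lemma vsum_insert:
  "finite A \<Longrightarrow> x \<notin> A \<Longrightarrow> vsum F (insert x A) = vadd (F x) (vsum F A)"
  by (simp add: vsum_def vadd_def)

lemma eq_vscale_if_diagonal:
  assumes "\<And>e c. g (e, c) = \<mu> e c * f (e, c)" and "\<And>e c. f (e, c) \<noteq> 0 \<Longrightarrow> \<mu> e c = \<nu>"
  shows "g = vscale \<nu> f"
proof
  fix x :: key
  obtain e c where "x = (e, c)" by fastforce
  then show "g x = vscale \<nu> f x"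
    using assms by (cases "f (e, c) = 0") (simp_all add: vscale_def)
qed

lemma eq_of_partial_sums_eq:
  fixes f g :: "nat \<Rightarrow> 'a::ab_group_add"
  assumes "\<And>m. m \<in> {1..N} \<Longrightarrow> (\<Sum>r=1..m. f r) = (\<Sum>r=1..m. g r)" "a \<in> {1..N}"
  shows "f a = g a"
proof -
  obtain b where a: "a = Suc b" using assms(2) by (cases a) auto
  have "(\<Sum>r=1..b. f r) = (\<Sum>r=1..b. g r)"
    using assms a by (cases "b = 0") auto
  moreover have "(\<Sum>r=1..Suc b. f r) = (\<Sum>r=1..Suc b. g r)"
    using assms a by blast
  ultimately show ?thesis using a by simp
qed

section \<open>First-order coefficients of the monodromy series\<close>

lemma conv_coeff0: "conv S T 0 = S 0 \<circ> T 0"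
  by (auto simp: conv_def opsum_def vsum_def)

lemma conv_coeff1: "conv S T (Suc 0) f = vadd (S 0 (T (Suc 0) f)) (S (Suc 0) (T 0 f))"
  by (auto simp: conv_def opsum_def vsum_def vadd_def)

lemma Lser_coeff0: "Lser n \<beta> i a b 0 = (if a = b then id else (\<lambda>_. vzero))"
  by (simp add: Lser_def)

lemma Lser_coeff1: "Lser n \<beta> i a b (Suc 0) = Eop i b a"
  by (simp add: Lser_def vscale_def fun_eq_iff)

lemma Eop_vzero: "Eop i a b vzero = vzero"
  by (simp add: Eop_def vzero_def fun_eq_iff split: prod.split)

lemma Tpart_coeff0:
  assumes "a \<in> {1..N}"
  shows "Tpart n N \<beta> m a b 0 = (if a = b then id else (\<lambda>_. vzero))"
proof (induction m arbitrary: b)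
  case 0
  show ?case by (simp add: Lser_coeff0)
next
  case (Suc m)
  have "Tpart n N \<beta> (Suc m) a b 0 f = vsum (\<lambda>c. if c = a then (if a = b then f else vzero) else vzero) {1..N}" for f
    by (auto simp: opsum_def conv_coeff0 Lser_coeff0 Suc.IH intro!: vsum_cong)
  then show ?case using assms by (simp add: vsum_delta fun_eq_iff)
qed

lemma Tpart_coeff1:
  assumes "a \<in> {1..N}" "b \<in> {1..N}"
  shows "Tpart n N \<beta> m a b (Suc 0) f = vsum (\<lambda>i. Eop i b a f) {..m}"
  using assms(2)
proof (induction m arbitrary: b f)
  case 0
  show ?case using Lser_coeff1[of n \<beta> 0 a b] by (simp add: vsum_def)
next
  case (Suc m)
  have "Tpart n N \<beta> (Suc m) a b (Suc 0) f
      = vsum (\<lambda>c. vadd (if c = a then Eop (Suc m) b a f else vzero)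
                        (if c = b then vsum (\<lambda>i. Eop i b a f) {..m} else vzero)) {1..N}"
    by (auto simp: opsum_def conv_coeff1 Lser_coeff0 Lser_coeff1 Tpart_coeff0[OF assms(1)]
        Suc.IH Eop_vzero vsum_vzero intro!: vsum_cong)
  also have "\<dots> = vsum (\<lambda>i. Eop i b a f) {..Suc m}"
    using assms(1) Suc.prems by (simp add: vsum_vadd vsum_delta) (simp add: vsum_def vadd_def add.commute)
  finally show ?case .
qed

lemma Tser_coeff0:
  "a \<in> {1..N} \<Longrightarrow> Tser n N \<beta> a b 0 = (if a = b then id else (\<lambda>_. vzero))"
  by (simp add: Tser_def Tpart_coeff0)

lemma Tser_coeff1:
  assumes "a \<in> {1..N}" "b \<in> {1..N}" "n \<ge> 1"
  shows "Tser n N \<beta> a b (Suc 0) f = vsum (\<lambda>i. Eop i b a f) {..<n}"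
proof -
  have "{..n - 1} = {..<n}" using assms(3) by auto
  then show ?thesis by (simp add: Tser_def Tpart_coeff1[OF assms(1,2)])
qed

definition tensor_weight :: "nat \<Rightarrow> nat list \<Rightarrow> nat \<Rightarrow> nat" where
  "tensor_weight n c a = card {i. i < n \<and> c ! i = a}"

lemma Tser_coeff1_diag:
  assumes "a \<in> {1..N}" "n \<ge> 1"
  shows "Tser n N \<beta> a a (Suc 0) f (e, c) = of_nat (tensor_weight n c a) * f (e, c)"
proof -
  have "c ! i = a \<Longrightarrow> c[i := a] = c" for i
    by (metis list_update_id)
  then have "Tser n N \<beta> a a (Suc 0) f (e, c) = (\<Sum>i<n. if c ! i = a then f (e, c) else 0)"
    by (simp add: Tser_coeff1[OF assms(1,1,2)] vsum_def Eop_def cong: if_cong)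
  also have "\<dots> = (\<Sum>i\<in>{i. i < n \<and> c ! i = a}. f (e, c))"
    by (simp add: sum.inter_filter[symmetric] conj_commute)
  finally show ?thesis by (simp add: tensor_weight_def)
qed

lemma Tshift_coeff0: "Tshift n N \<beta> j a b 0 = Tser n N \<beta> a b 0"
  by (simp add: Tshift_def fun_eq_iff)

lemma Tshift_coeff1: "Tshift n N \<beta> j a b (Suc 0) = Tser n N \<beta> a b (Suc 0)"
  by (simp add: Tshift_def opsum_def vsum_def vscale_def fun_eq_iff)

lemma prodser_coeff0:
  assumes "\<And>r. r \<in> {1..m} \<Longrightarrow> F r 0 = (if P r then id else (\<lambda>_. vzero))"
  shows "prodser F m 0 = (if \<forall>r\<in>{1..m}. P r then id else (\<lambda>_. vzero))"
  using assms
proof (induction m)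
  case 0
  show ?case by (simp add: unitser_def)
next
  case (Suc m)
  have "prodser F m 0 = (if \<forall>r\<in>{1..m}. P r then id else (\<lambda>_. vzero))"
    using Suc by simp
  moreover have "F (Suc m) 0 = (if P (Suc m) then id else (\<lambda>_. vzero))"
    using Suc.prems by simp
  moreover have "{1..Suc m} = insert (Suc m) {1..m}" by auto
  ultimately show ?case by (auto simp: conv_coeff0 fun_eq_iff)
qed

lemma prodser_coeff1:
  assumes "\<And>r. r \<in> {1..m} \<Longrightarrow> F r 0 = (if P r then id else (\<lambda>_. vzero))"
    and "\<And>r. r \<in> {1..m} \<Longrightarrow> F r (Suc 0) vzero = vzero"
  shows "prodser F m (Suc 0) g
    = vsum (\<lambda>r. if \<forall>r'\<in>{1..m} - {r}. P r' then F r (Suc 0) g else vzero) {1..m}"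
  using assms
proof (induction m arbitrary: g)
  case 0
  show ?case by (simp add: unitser_def vsum_def vzero_def)
next
  case (Suc m)
  let ?Q = "\<lambda>r. \<forall>r'\<in>{1..m} - {r}. P r'"
  have IH: "prodser F m (Suc 0) h = vsum (\<lambda>r. if ?Q r then F r (Suc 0) h else vzero) {1..m}" for h
    using Suc by simp
  have head: "prodser F m 0 (F (Suc m) (Suc 0) g)
      = (if \<forall>r\<in>{1..m}. P r then F (Suc m) (Suc 0) g else vzero)"
    using prodser_coeff0[of m F P] Suc.prems by simp
  have tail: "prodser F m (Suc 0) (F (Suc m) 0 g)
      = vsum (\<lambda>r. if ?Q r \<and> P (Suc m) then F r (Suc 0) g else vzero) {1..m}"
  proof (cases "P (Suc m)")
    case True
    then show ?thesis using Suc.prems(1) by (simp add: IH)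
  next
    case False
    have "vsum (\<lambda>r. if ?Q r then F r (Suc 0) vzero else vzero) {1..m} = vsum (\<lambda>_. vzero) {1..m}"
      using Suc.prems(2) by (intro vsum_cong) auto
    then show ?thesis using False Suc.prems(1)[of "Suc m"] by (simp add: IH vsum_vzero)
  qed
  have split: "vsum G {1..Suc m} = vadd (G (Suc m)) (vsum G {1..m})" for G
  proof -
    have "{1..Suc m} = insert (Suc m) {1..m}" by auto
    then show ?thesis by (simp add: vsum_insert)
  qed
  have last: "{1..Suc m} - {Suc m} = {1..m}" by auto
  have "vsum (\<lambda>r. if \<forall>r'\<in>{1..Suc m} - {r}. P r' then F r (Suc 0) g else vzero) {1..Suc m}
      = vadd (if \<forall>r\<in>{1..m}. P r then F (Suc m) (Suc 0) g else vzero)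
          (vsum (\<lambda>r. if \<forall>r'\<in>{1..Suc m} - {r}. P r' then F r (Suc 0) g else vzero) {1..m})"
    by (simp only: split last)
  also have "\<dots> = vadd (prodser F m 0 (F (Suc m) (Suc 0) g)) (prodser F m (Suc 0) (F (Suc m) 0 g))"
    unfolding head tail by (intro arg_cong[where f = "vadd _"] vsum_cong) (auto simp: le_Suc_eq)
  finally show ?case by (simp add: conv_coeff1)
qed

lemma Aser_coeff1:
  assumes "m \<in> {1..N}" "n \<ge> 1"
  shows "Aser n N \<beta> m (Suc 0) f = vsum (\<lambda>r. Tser n N \<beta> r r (Suc 0) f) {1..m}"
proof -
  have summand: "prodser (\<lambda>r. Tshift n N \<beta> (r - 1) r (w r)) m (Suc 0) f
      = (if w = id then vsum (\<lambda>r. Tser n N \<beta> r r (Suc 0) f) {1..m} else vzero)"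
    if w: "w permutes {1..m}" for w
  proof -
    have range: "r \<in> {1..N}" "w r \<in> {1..N}" if "r \<in> {1..m}" for r
      using permutes_in_image[OF w, of r] that assms(1) by auto
    have F0: "Tshift n N \<beta> (r - 1) r (w r) 0 = (if w r = r then id else (\<lambda>_. vzero))"
      if "r \<in> {1..m}" for r
      using range[OF that] by (auto simp: Tshift_coeff0 Tser_coeff0)
    have F1: "Tshift n N \<beta> (r - 1) r (w r) (Suc 0) vzero = vzero" if "r \<in> {1..m}" for r
      using range[OF that] assms(2) by (simp add: Tshift_coeff1 Tser_coeff1 Eop_vzero vsum_vzero)
    have "prodser (\<lambda>r. Tshift n N \<beta> (r - 1) r (w r)) m (Suc 0) f
        = vsum (\<lambda>r. if \<forall>r'\<in>{1..m} - {r}. w r' = r'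
                  then Tshift n N \<beta> (r - 1) r (w r) (Suc 0) f else vzero) {1..m}"
      by (rule prodser_coeff1[where P = "\<lambda>r. w r = r", OF F0 F1])
    also have "\<dots> = vsum (\<lambda>r. if \<forall>r'\<in>{1..m} - {r}. w r' = r'
                  then Tser n N \<beta> r (w r) (Suc 0) f else vzero) {1..m}"
      by (simp only: Tshift_coeff1)
    also have "\<dots> = (if w = id then vsum (\<lambda>r. Tser n N \<beta> r r (Suc 0) f) {1..m} else vzero)"
    proof (cases "w = id")
      case False
      have moves_other: "\<not> (\<forall>r'\<in>{1..m} - {r}. w r' = r')" for r
        using permutes_superset[OF w, of "{r}"] False by auto
      have "vsum (\<lambda>r. if \<forall>r'\<in>{1..m} - {r}. w r' = r' then Tser n N \<beta> r (w r) (Suc 0) f else vzero) {1..m}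
          = vsum (\<lambda>_. vzero) {1..m}"
        by (intro vsum_cong if_not_P moves_other)
      then show ?thesis using False by (simp add: vsum_vzero)
    qed simp
    finally show ?thesis .
  qed
  have "Aser n N \<beta> m (Suc 0) f
      = vsum (\<lambda>w. if w = id then vsum (\<lambda>r. Tser n N \<beta> r r (Suc 0) f) {1..m} else vzero)
          {w. w permutes {1..m}}"
    unfolding Aser_def opsum_def
    by (rule vsum_cong) (simp only: mem_Collect_eq summand, simp add: vscale_def vzero_def)
  also have "\<dots> = vsum (\<lambda>r. Tser n N \<beta> r r (Suc 0) f) {1..m}"
    by (simp add: vsum_delta finite_permutations)
  finally show ?thesis .
qed

lemma Aser_coeff1_apply:
  assumes "m \<in> {1..N}" "n \<ge> 1"
  shows "Aser n N \<beta> m (Suc 0) f (e, c) = (\<Sum>r=1..m. of_nat (tensor_weight n c r)) * f (e, c)"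
  using assms by (simp add: Aser_coeff1 vsum_def Tser_coeff1_diag sum_distrib_right)

section \<open>The antisymmetrised basis vectors\<close>

lemma under_bounds:
  assumes "N \<ge> 1"
  shows "1 \<le> under N x" "under N x \<le> int N"
proof -
  have "0 < int N" using assms by simp
  from pos_mod_sign[OF this, of "x - 1"] pos_mod_bound[OF this, of "x - 1"]
  show "1 \<le> under N x" "under N x \<le> int N" by (simp_all add: under_def)
qed

lemma under_minus_over:
  assumes "N \<ge> 1"
  shows "under N x - int N * over N x = x"
proof -
  define q where "q = (x - 1) div int N"
  have "under N x - x = int N * - q"
    by (simp add: under_def q_def algebra_simps flip: minus_mod_eq_mult_div)
  then have "over N x = int N * - q div int N"
    by (simp add: over_def)
  also have "\<dots> = - q"
    by (rule nonzero_mult_div_cancel_left) (use assms in simp)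
  finally have "over N x = - q" .
  then show ?thesis
    by (simp add: under_def q_def algebra_simps flip: minus_mod_eq_mult_div)
qed

definition uhat_key :: "nat \<Rightarrow> nat \<Rightarrow> int list \<Rightarrow> (nat \<Rightarrow> nat) \<Rightarrow> key" where
  "uhat_key n N l w =
    (map (\<lambda>r. over N (l ! w r)) [0..<n], map (\<lambda>r. nat (under N (l ! w r))) [0..<n])"

lemma uhat_apply:
  "uhat n N l x = (\<Sum>w | w permutes {..<n}. of_int (sign w) * (if x = uhat_key n N l w then 1 else 0))"
  by (simp add: uhat_def vsum_def vscale_def basis_def uhat_key_def)

lemma uhat_support:
  assumes "uhat n N l x \<noteq> 0"
  obtains w where "w permutes {..<n}" "x = uhat_key n N l w"
proof -
  from assms obtain w where "w \<in> {w. w permutes {..<n}}"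
    and "of_int (sign w) * (if x = uhat_key n N l w then 1 else 0) \<noteq> (0::complex)"
    unfolding uhat_apply by (rule sum.not_neutral_contains_not_neutral)
  then show ?thesis using that by (auto split: if_splits)
qed

lemma uhat_key_eqD:
  assumes "N \<ge> 1" "uhat_key n N k v = uhat_key n N l w" "r < n"
  shows "k ! v r = l ! w r"
proof -
  have "over N (k ! v r) = over N (l ! w r)" "nat (under N (k ! v r)) = nat (under N (l ! w r))"
    using assms(2,3) by (auto simp: uhat_key_def map_eq_conv)
  moreover have "under N (k ! v r) \<ge> 0" "under N (l ! w r) \<ge> 0"
    using under_bounds(1)[OF assms(1)] by (meson order_trans zero_le_one)+
  ultimately show ?thesis
    by (metis under_minus_over[OF assms(1)] eq_nat_nat_iff)
qed

lemma uhat_key_eq_leading_key: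
  assumes "N \<ge> 1" "k \<in> Lone n" "l \<in> Lone n" "w permutes {..<n}"
    and "uhat_key n N k id = uhat_key n N l w"
  shows "l = k \<and> w = id"
proof -
  have len: "length k = n" "length l = n" and dec: "sorted_wrt (>) k" "sorted_wrt (>) l"
    using assms(2,3) by (auto simp: Lone_def)
  have nth_k: "k ! r = l ! w r" if "r < n" for r
    using uhat_key_eqD[OF assms(1,5) that] by simp
  have "k = permute_list w l"
    using assms(4) len by (intro nth_equalityI) (simp_all add: nth_k permute_list_nth)
  then have "set (rev l) = set (rev k)"
    using assms(4) len by simp
  moreover have "sorted_wrt (<) (rev k)" "sorted_wrt (<) (rev l)"
    using dec by (simp_all add: sorted_wrt_rev)
  ultimately have "l = k"
    using strict_sorted_equal by fastforce
  have "distinct k"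
    using \<open>sorted_wrt (<) (rev k)\<close> by (simp add: strict_sorted_iff)
  have "w r = r" for r
  proof (cases "r < n")
    case True
    then have "w r < n" using permutes_in_image[OF assms(4), of r] by simp
    then show ?thesis
      using nth_k[OF True] \<open>l = k\<close> \<open>distinct k\<close> True len by (simp add: nth_eq_iff_index_eq)
  next
    case False
    then show ?thesis using permutes_not_in[OF assms(4)] by simp
  qed
  then show ?thesis using \<open>l = k\<close> by auto
qed

lemma uhat_at_leading_key:
  assumes "N \<ge> 1" "k \<in> Lone n" "l \<in> Lone n"
  shows "uhat n N l (uhat_key n N k id) = (if l = k then 1 else 0)"
proof -
  have "uhat n N l (uhat_key n N k id) = (\<Sum>w | w permutes {..<n}. if l = k \<and> w = id then 1 else 0)"
    unfolding uhat_apply using uhat_key_eq_leading_key[OF assms] by (intro sum.cong) auto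
  then show ?thesis by (simp add: finite_permutations)
qed

lemma sum_nth_eq_sum_tensor_weight:
  assumes "\<And>i. i < n \<Longrightarrow> c ! i \<in> {1..N}"
  shows "(\<Sum>i<n. c ! i) = (\<Sum>a=1..N. a * tensor_weight n c a)"
proof -
  have "(\<Sum>i<n. c ! i) = (\<Sum>i<n. \<Sum>a=1..N. if c ! i = a then a else 0)"
    using assms by (intro sum.cong) auto
  also have "\<dots> = (\<Sum>a=1..N. \<Sum>i<n. if c ! i = a then a else 0)"
    by (rule sum.swap)
  also have "\<dots> = (\<Sum>a=1..N. a * tensor_weight n c a)"
    by (simp add: tensor_weight_def sum.If_cases Int_def conj_commute mult.commute)
  finally show ?thesis .
qed

lemma uhat_key_degree:
  assumes "N \<ge> 1" "w permutes {..<n}" "uhat_key n N l w = (e, c)"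
  shows "int N * (\<Sum>i<n. e ! i) = int (\<Sum>a=1..N. a * tensor_weight n c a) - (\<Sum>i<n. l ! i)"
proof -
  have e: "e ! i = over N (l ! w i)" and c: "int (c ! i) = under N (l ! w i)" if "i < n" for i
    using assms(3) that under_bounds[OF assms(1), of "l ! w i"] by (auto simp: uhat_key_def)
  have weights_nat: "(\<Sum>i<n. c ! i) = (\<Sum>a=1..N. a * tensor_weight n c a)"
  proof (rule sum_nth_eq_sum_tensor_weight)
    fix i assume "i < n"
    then have "1 \<le> int (c ! i)" "int (c ! i) \<le> int N"
      using c under_bounds[OF assms(1), of "l ! w i"] by simp_all
    then show "c ! i \<in> {1..N}" by simp
  qed
  have N_over: "int N * over N x = under N x - x" for x
    using under_minus_over[OF assms(1), of x] by simp
  have "int N * (\<Sum>i<n. e ! i) = (\<Sum>i<n. under N (l ! w i)) - (\<Sum>i<n. l ! w i)"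
    by (simp add: e N_over sum_distrib_left flip: sum_subtractf)
  also have "(\<Sum>i<n. under N (l ! w i)) = (\<Sum>i<n. int (c ! i))"
    using c by simp
  also have "\<dots> = int (\<Sum>a=1..N. a * tensor_weight n c a)"
    unfolding weights_nat[symmetric] by simp
  also have "(\<Sum>i<n. l ! w i) = (\<Sum>i<n. l ! i)"
    using sum.permute[OF assms(2), of "\<lambda>i. l ! i"] by (simp add: comp_def)
  finally show ?thesis .
qed

section \<open>Weight and degree on the support of the eigenvector\<close>

lemma is_X_apply:
  assumes "is_X n N \<beta> k X"
  obtains cf where "\<And>x. X x = uhat n N k x + (\<Sum>l\<in>{l \<in> Lone n. dom_less l k}. cf l * uhat n N l x)"
proof -
  from assms obtain cf
    where "X = vadd (uhat n N k) (vsum (\<lambda>l. vscale (cf l) (uhat n N l)) {l \<in> Lone n. dom_less l k})"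
    by (auto simp: is_X_def)
  then show ?thesis by (intro that) (simp add: vadd_def vsum_def vscale_def)
qed

lemma is_X_leading_coeff:
  assumes "is_X n N \<beta> k X" "N \<ge> 1" "k \<in> Lone n"
  shows "X (uhat_key n N k id) = 1"
proof -
  obtain cf where X: "\<And>x. X x = uhat n N k x + (\<Sum>l\<in>{l \<in> Lone n. dom_less l k}. cf l * uhat n N l x)"
    using is_X_apply[OF assms(1)] by blast
  have "uhat n N l (uhat_key n N k id) = 0" if "l \<in> Lone n" "dom_less l k" for l
    using that uhat_at_leading_key[OF assms(2,3)] by (simp add: dom_less_def)
  then show ?thesis
    using uhat_at_leading_key[OF assms(2,3,3)] by (simp add: X)
qed

lemma is_X_support:
  assumes "is_X n N \<beta> k X" "k \<in> Lone n" "X x \<noteq> 0"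
  obtains l w where "length l = n" "sum_list l = sum_list k" "w permutes {..<n}"
    "x = uhat_key n N l w"
proof -
  obtain cf where X: "\<And>x. X x = uhat n N k x + (\<Sum>l\<in>{l \<in> Lone n. dom_less l k}. cf l * uhat n N l x)"
    using is_X_apply[OF assms(1)] by blast
  have "\<exists>l. length l = n \<and> sum_list l = sum_list k \<and> uhat n N l x \<noteq> 0"
  proof (cases "uhat n N k x = 0")
    case True
    then obtain l where "l \<in> {l \<in> Lone n. dom_less l k}" "cf l * uhat n N l x \<noteq> 0"
      using assms(3) X[of x] by (auto elim: sum.not_neutral_contains_not_neutral)
    then show ?thesis using assms(2) by (auto simp: dom_less_def Lone_def)
  qed (use assms(2) in \<open>auto simp: Lone_def\<close>)
  then show ?thesis using that by (metis uhat_support)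
qed

lemma tensor_weight_eq_on_support:
  assumes "is_X n N \<beta> k X" "N \<ge> 1" "n \<ge> 1" "k \<in> Lone n" "X (e, c) \<noteq> 0" "a \<in> {1..N}"
  shows "tensor_weight n c a = tensor_weight n (snd (uhat_key n N k id)) a"
proof -
  obtain ek ck where key: "uhat_key n N k id = (ek, ck)" by fastforce
  have X1: "X (ek, ck) = 1"
    using is_X_leading_coeff[OF assms(1,2,4)] key by simp
  have partial: "(\<Sum>r=1..m. of_nat (tensor_weight n c r))
      = (\<Sum>r=1..m. (of_nat (tensor_weight n ck r) :: complex))"
    if m: "m \<in> {1..N}" for m
  proof -
    obtain ev where ev: "Aser n N \<beta> m (Suc 0) X = vscale ev X"
      using assms(1) m unfolding is_X_def by blast
    have "(\<Sum>r=1..m. of_nat (tensor_weight n ck r)) = ev"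
      using fun_cong[OF ev, of "(ek, ck)"] X1 by (simp add: Aser_coeff1_apply[OF m assms(3)] vscale_def)
    moreover have "(\<Sum>r=1..m. of_nat (tensor_weight n c r)) = ev"
      using fun_cong[OF ev, of "(e, c)"] assms(5) by (simp add: Aser_coeff1_apply[OF m assms(3)] vscale_def)
    ultimately show ?thesis by simp
  qed
  have "(of_nat (tensor_weight n c a) :: complex) = of_nat (tensor_weight n ck a)"
    by (rule eq_of_partial_sums_eq[OF partial assms(6)])
  then show ?thesis using key by simp
qed

lemma tensor_weight_leading_key:
  "tensor_weight n (snd (uhat_key n N k id)) a = card {i. i < n \<and> nat (under N (k ! i)) = a}"
  unfolding tensor_weight_def uhat_key_def by (rule arg_cong[where f = card]) auto

lemma degree_eq_on_support:
  assumes "is_X n N \<beta> k X" "N \<ge> 1" "n \<ge> 1" "k \<in> Lone n" "X (e, c) \<noteq> 0"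
  shows "(\<Sum>i<n. e ! i) = (\<Sum>i<n. over N (k ! i))"
proof -
  obtain l w where l: "length l = n" "sum_list l = sum_list k" and w: "w permutes {..<n}"
    and key: "uhat_key n N l w = (e, c)"
    using is_X_support[OF assms(1,4,5)] by metis
  obtain ek ck where key_k: "uhat_key n N k id = (ek, ck)" by fastforce
  have "tensor_weight n c a = tensor_weight n ck a" if "a \<in> {1..N}" for a
    using tensor_weight_eq_on_support[OF assms that] key_k by simp
  then have weights: "(\<Sum>a=1..N. a * tensor_weight n c a) = (\<Sum>a=1..N. a * tensor_weight n ck a)"
    by simp
  have "(\<Sum>i<n. l ! i) = (\<Sum>i<n. k ! i)"
    using l assms(4) by (simp add: Lone_def sum_list_sum_nth atLeast0LessThan)
  then have "int N * (\<Sum>i<n. e ! i) = int (\<Sum>a=1..N. a * tensor_weight n c a) - (\<Sum>i<n. k ! i)"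
    using uhat_key_degree[OF assms(2) w key] by simp
  also have "\<dots> = int N * (\<Sum>i<n. ek ! i)"
    unfolding weights using uhat_key_degree[OF assms(2) permutes_id key_k] by simp
  also have "(\<Sum>i<n. ek ! i) = (\<Sum>i<n. over N (k ! i))"
    using key_k by (auto simp: uhat_key_def intro!: sum.cong)
  finally show ?thesis using assms(2) by simp
qed

theorem proposition13:
  fixes N n :: nat and \<beta> :: real and k :: "int list" and X :: vec
  assumes "N \<ge> 1" and "n \<ge> 1" and "\<beta> > 0" and "k \<in> Lone n"
    and "is_X n N \<beta> k X"
  shows "(\<forall>a\<in>{1..N}. Tser n N \<beta> a a 1 X
            = vscale (of_nat (card {i. i < n \<and> nat (under N (k ! i)) = a})) X)
         \<and> Dop n X = vscale (of_int (\<Sum>i<n. over N (k ! i))) X"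
proof (intro conjI ballI)
  fix a assume "a \<in> {1..N}"
  then show "Tser n N \<beta> a a 1 X = vscale (of_nat (card {i. i < n \<and> nat (under N (k ! i)) = a})) X"
    using tensor_weight_eq_on_support[OF assms(5,1,2,4)] Tser_coeff1_diag[OF _ assms(2)]
    by (intro eq_vscale_if_diagonal[where \<mu> = "\<lambda>e c. of_nat (tensor_weight n c a)"])
      (simp_all add: tensor_weight_leading_key)
next
  show "Dop n X = vscale (of_int (\<Sum>i<n. over N (k ! i))) X"
    using degree_eq_on_support[OF assms(5,1,2,4)]
    by (intro eq_vscale_if_diagonal[where \<mu> = "\<lambda>e c. of_int (\<Sum>i<n. e ! i)"])
      (simp_all add: Dop_def zdop_def sum_distrib_right)
qed

end
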